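(* Let $d,k,t\ge 0$ be integers with $t\le d$. Then $2f(k,d)\le f(k,d-t)+f(k,d+t)$.
   Context: For a graph $G=(V,E)$ and an integer $k\ge 0$, a $k$-independent set is a set $S\subseteq V$ such that the induced subgraph $G[S]$ has maximum degree at most $k$; $\alpha_k(G)$ denotes the maximum cardinality of a $k$-independent set of $G$. $n(G)$ is the number of vertices and $d(G)=2|E(G)|/n(G)$ the average degree. For integers $d,k\ge 0$, $f(k,d)=\inf\left\{\frac{\alpha_k(G)}{n(G)} : G \text{ a finite simple graph with at least one vertex and } d(G)\le d\right\}$. *)

theory Defs
  imports Complex_Main
begin

text \<open>Finite simple graphs are represented by a finite vertex set V of naturals
  (every finite graph is isomorphic to one of this form) and a set E of
  2-element subsets of V.\<close>

definition simple_graph :: "nat set \<Rightarrow> nat set set \<Rightarrow> bool" where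
  "simple_graph V E \<longleftrightarrow> finite V \<and>
     (\<forall>e\<in>E. \<exists>u v. e = {u, v} \<and> u \<noteq> v \<and> u \<in> V \<and> v \<in> V)"

definition k_independent :: "nat \<Rightarrow> nat set \<Rightarrow> nat set set \<Rightarrow> nat set \<Rightarrow> bool" where
  "k_independent k V E S \<longleftrightarrow> S \<subseteq> V \<and>
     (\<forall>u\<in>S. card {v\<in>S. {u, v} \<in> E} \<le> k)"

definition alpha_k :: "nat \<Rightarrow> nat set \<Rightarrow> nat set set \<Rightarrow> nat" where
  "alpha_k k V E = Max {card S | S. k_independent k V E S}"

definition avg_degree :: "nat set \<Rightarrow> nat set set \<Rightarrow> real" where
  "avg_degree V E = 2 * real (card E) / real (card V)"

definition f :: "nat \<Rightarrow> nat \<Rightarrow> real" where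
  "f k d = Inf {real (alpha_k k V E) / real (card V) | V E.
                  simple_graph V E \<and> V \<noteq> {} \<and> avg_degree V E \<le> real d}"

end

theory Submission
  imports Defs
begin

text \<open>Let G1 be a graph of average degree at most
  d - t and G2 one of average degree at most d + t, with n1 resp. n2 vertices.  The
  disjoint union of n2 copies of G1 and n1 copies of G2 has 2 n1 n2 vertices and
  average degree at most d, while its k-independence number is at most the sum of
  those of the copies.  Hence its ratio alpha_k/n is at most the mean of the ratios
  of G1 and G2, so 2 f(k,d) is below the sum of any two ratios admissible for
  d - t and d + t; taking infima over both gives the theorem.\<close>

lemma simple_graph_finite_edges:
  assumes "simple_graph V E"
  shows "finite E"
proof -
  have "E \<subseteq> Pow V" using assms unfolding simple_graph_def by fastforce
  moreover have "finite V" using assms unfolding simple_graph_def by blast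
  ultimately show ?thesis by (simp add: finite_subset)
qed

lemma simple_graph_empty: "simple_graph {} {}"
  unfolding simple_graph_def by simp

text \<open>The sizes of k-independent sets form a finite nonempty set (the empty set
  is always k-independent), so alpha_k is an attained maximum.\<close>

lemma finite_k_independent_cards:
  assumes "finite V"
  shows "finite {card S | S. k_independent k V E S}"
proof -
  have "{card S | S. k_independent k V E S} \<subseteq> card ` Pow V"
    unfolding k_independent_def by blast
  thus ?thesis using assms by (simp add: finite_subset)
qed

lemma card_le_alpha_k:
  assumes "finite V" and "k_independent k V E S"
  shows "card S \<le> alpha_k k V E"
  unfolding alpha_k_def using assms finite_k_independent_cards by (auto intro: Max_ge)

lemma alpha_k_attained:
  assumes "finite V"
  obtains S where "k_independent k V E S" and "card S = alpha_k k V E"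
proof -
  have "k_independent k V E {}" unfolding k_independent_def by simp
  hence "{card S | S. k_independent k V E S} \<noteq> {}" by blast
  hence "alpha_k k V E \<in> {card S | S. k_independent k V E S}"
    unfolding alpha_k_def using Max_in finite_k_independent_cards[OF assms] by blast
  thus ?thesis using that by auto
qed

lemma alpha_k_empty: "alpha_k k {} E = 0"
proof -
  obtain S where "k_independent k {} E S" "card S = alpha_k k {} E"
    using alpha_k_attained by blast
  thus ?thesis unfolding k_independent_def by auto
qed

lemma avg_degree_le_iff:
  assumes "finite V" and "V \<noteq> {}"
  shows "avg_degree V E \<le> D \<longleftrightarrow> 2 * real (card E) \<le> D * real (card V)"
  using assms unfolding avg_degree_def by (simp add: pos_divide_le_eq card_gt_0_iff)

text \<open>If h embeds the vertices of (V1, E1) injectively and maps every edge to an edge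
  of (V, E), then the preimage of a k-independent set of (V, E) is k-independent in
  (V1, E1): the neighbours of u inside the preimage inject into the neighbours of
  h u inside S.\<close>

lemma k_independent_preimage:
  assumes S: "k_independent k V E S" and fin: "finite V"
    and inj: "inj_on h V1" and edges: "\<forall>e\<in>E1. h ` e \<in> E"
  shows "k_independent k V1 E1 {v\<in>V1. h v \<in> S}"
  unfolding k_independent_def
proof (intro conjI ballI)
  show "{v \<in> V1. h v \<in> S} \<subseteq> V1" by blast
next
  fix u assume u: "u \<in> {v \<in> V1. h v \<in> S}"
  let ?N1 = "{v \<in> {v \<in> V1. h v \<in> S}. {u, v} \<in> E1}"
  let ?N = "{w\<in>S. {h u, w} \<in> E}"
  have "finite S" using S fin unfolding k_independent_def using finite_subset by blast
  moreover have "inj_on h ?N1" using inj by (rule inj_on_subset) blast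
  moreover have "h ` ?N1 \<subseteq> ?N" using edges by fastforce
  ultimately have "card ?N1 \<le> card ?N" by (intro card_inj_on_le) auto
  also have "\<dots> \<le> k" using S u unfolding k_independent_def by blast
  finally show "card ?N1 \<le> k" .
qed

section \<open>Disjoint unions\<close>

definition sum_vertices :: "nat set \<Rightarrow> nat set \<Rightarrow> nat set" where
  "sum_vertices V1 V2 = (\<lambda>v. 2 * v) ` V1 \<union> (\<lambda>v. 2 * v + 1) ` V2"

definition sum_edges :: "nat set set \<Rightarrow> nat set set \<Rightarrow> nat set set" where
  "sum_edges E1 E2 = image (\<lambda>v. 2 * v) ` E1 \<union> image (\<lambda>v. 2 * v + 1) ` E2"

lemma inj_even: "inj (\<lambda>v::nat. 2 * v)"
  by (auto simp: inj_def)

lemma inj_odd: "inj (\<lambda>v::nat. 2 * v + 1)"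
  by (auto simp: inj_def)

lemma even_neq_odd: "2 * u \<noteq> 2 * v + (1::nat)"
  by presburger

lemma simple_graph_sum:
  assumes "simple_graph V1 E1" and "simple_graph V2 E2"
  shows "simple_graph (sum_vertices V1 V2) (sum_edges E1 E2)"
proof -
  have "\<exists>u v. h ` e = {u, v} \<and> u \<noteq> v \<and> u \<in> h ` V \<and> v \<in> h ` V"
    if G: "simple_graph V E" "e \<in> E" and inj: "inj h" for V E e and h :: "nat \<Rightarrow> nat"
  proof -
    obtain u v where "e = {u, v}" "u \<noteq> v" "u \<in> V" "v \<in> V"
      using G unfolding simple_graph_def by blast
    moreover have "h u \<noteq> h v" using \<open>u \<noteq> v\<close> inj by (simp add: inj_eq)
    ultimately show ?thesis by blast
  qed
  thus ?thesis using assms inj_even inj_odd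
    unfolding simple_graph_def sum_vertices_def sum_edges_def by (auto 0 4)
qed

lemma card_sum_vertices:
  assumes "finite V1" and "finite V2"
  shows "card (sum_vertices V1 V2) = card V1 + card V2"
proof -
  have "(\<lambda>v. 2 * v) ` V1 \<inter> (\<lambda>v. 2 * v + 1) ` V2 = {}" using even_neq_odd by blast
  thus ?thesis using assms inj_even inj_odd unfolding sum_vertices_def
    by (simp add: card_Un_disjoint card_image inj_on_subset[of _ UNIV])
qed

lemma card_sum_edges:
  assumes "simple_graph V1 E1" and "simple_graph V2 E2"
  shows "card (sum_edges E1 E2) = card E1 + card E2"
proof -
  have "image (\<lambda>v. 2 * v) ` E1 \<inter> image (\<lambda>v. 2 * v + 1) ` E2 = {}"
  proof (rule ccontr)
    assume "\<not> ?thesis"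
    then obtain e1 e2 where "e1 \<in> E1" "(\<lambda>v. 2 * v) ` e1 = (\<lambda>v. 2 * v + 1) ` e2" by blast
    moreover obtain u v where "e1 = {u, v}"
      using assms(1) \<open>e1 \<in> E1\<close> unfolding simple_graph_def by blast
    ultimately show False using even_neq_odd by (metis imageE insertI1 image_eqI)
  qed
  moreover have "inj_on (image (\<lambda>v. 2 * v)) E1" "inj_on (image (\<lambda>v. 2 * v + 1)) E2"
    using inj_even inj_odd by (simp_all add: inj_on_def inj_image_eq_iff)
  ultimately show ?thesis
    using assms simple_graph_finite_edges unfolding sum_edges_def
    by (simp add: card_Un_disjoint card_image)
qed

text \<open>A k-independent set of the union splits into preimages in both parts, each
  k-independent there; so alpha_k is subadditive under disjoint union.\<close>

lemma alpha_k_sum_le: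
  assumes "finite V1" and "finite V2"
  shows "alpha_k k (sum_vertices V1 V2) (sum_edges E1 E2) \<le> alpha_k k V1 E1 + alpha_k k V2 E2"
proof -
  let ?V = "sum_vertices V1 V2" and ?E = "sum_edges E1 E2"
  have fin: "finite ?V" using assms unfolding sum_vertices_def by simp
  obtain S where S: "k_independent k ?V ?E S" "card S = alpha_k k ?V ?E"
    using alpha_k_attained[OF fin] by blast
  define S1 where "S1 = {v\<in>V1. 2 * v \<in> S}"
  define S2 where "S2 = {v\<in>V2. 2 * v + 1 \<in> S}"
  have "k_independent k V1 E1 S1" unfolding S1_def
    using inj_even by (intro k_independent_preimage[OF S(1) fin])
      (auto simp: sum_edges_def inj_on_subset[of _ UNIV])
  hence le1: "card S1 \<le> alpha_k k V1 E1" using card_le_alpha_k assms(1) by blast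
  have "k_independent k V2 E2 S2" unfolding S2_def
    using inj_odd by (intro k_independent_preimage[OF S(1) fin])
      (auto simp: sum_edges_def inj_on_subset[of _ UNIV])
  hence le2: "card S2 \<le> alpha_k k V2 E2" using card_le_alpha_k assms(2) by blast
  have "S = sum_vertices S1 S2"
    using S(1) unfolding k_independent_def S1_def S2_def sum_vertices_def by blast
  moreover have "finite S1" "finite S2" using assms unfolding S1_def S2_def by simp_all
  ultimately have "card S = card S1 + card S2" using card_sum_vertices by metis
  thus ?thesis using S(2) le1 le2 by linarith
qed

lemma disjoint_copies:
  assumes g: "simple_graph V E"
  obtains V' E' where "simple_graph V' E'" "card V' = m * card V" "card E' = m * card E"
    "alpha_k k V' E' \<le> m * alpha_k k V E"
proof (induction m arbitrary: thesis)
  case 0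
  thus ?case using simple_graph_empty alpha_k_empty by force
next
  case (Suc m)
  then obtain V' E' where IH: "simple_graph V' E'" "card V' = m * card V"
    "card E' = m * card E" "alpha_k k V' E' \<le> m * alpha_k k V E" by blast
  have fin: "finite V'" "finite V" using IH(1) g unfolding simple_graph_def by blast+
  show ?case
  proof (rule Suc.prems)
    show "simple_graph (sum_vertices V' V) (sum_edges E' E)"
      using simple_graph_sum[OF IH(1) g] .
    show "card (sum_vertices V' V) = Suc m * card V"
      using card_sum_vertices[OF fin] IH(2) by simp
    show "card (sum_edges E' E) = Suc m * card E"
      using card_sum_edges[OF IH(1) g] IH(3) by simp
    show "alpha_k k (sum_vertices V' V) (sum_edges E' E) \<le> Suc m * alpha_k k V E"
      using alpha_k_sum_le[OF fin, of k E' E] IH(4) by simp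
  qed
qed

section \<open>Mixing two graphs\<close>

text \<open>The union of card V2 copies of the first graph and card V1 copies of the second:
  both parts have card V1 * card V2 vertices, so the two graphs enter with equal
  weight.\<close>

lemma balanced_union:
  assumes G1: "simple_graph V1 E1" and G2: "simple_graph V2 E2"
  obtains V E where "simple_graph V E" "card V = 2 * card V1 * card V2"
    "card E = card V2 * card E1 + card V1 * card E2"
    "alpha_k k V E \<le> card V2 * alpha_k k V1 E1 + card V1 * alpha_k k V2 E2"
proof -
  obtain Va Ea where A: "simple_graph Va Ea" "card Va = card V2 * card V1"
    "card Ea = card V2 * card E1" "alpha_k k Va Ea \<le> card V2 * alpha_k k V1 E1"
    using disjoint_copies[OF G1] by metis
  obtain Vb Eb where B: "simple_graph Vb Eb" "card Vb = card V1 * card V2"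
    "card Eb = card V1 * card E2" "alpha_k k Vb Eb \<le> card V1 * alpha_k k V2 E2"
    using disjoint_copies[OF G2] by metis
  have fin: "finite Va" "finite Vb" using A(1) B(1) unfolding simple_graph_def by blast+
  show ?thesis
  proof (rule that)
    show "simple_graph (sum_vertices Va Vb) (sum_edges Ea Eb)"
      using simple_graph_sum[OF A(1) B(1)] .
    show "card (sum_vertices Va Vb) = 2 * card V1 * card V2"
      using card_sum_vertices[OF fin] A(2) B(2) by simp
    show "card (sum_edges Ea Eb) = card V2 * card E1 + card V1 * card E2"
      using card_sum_edges[OF A(1) B(1)] A(3) B(3) by simp
    show "alpha_k k (sum_vertices Va Vb) (sum_edges Ea Eb)
        \<le> card V2 * alpha_k k V1 E1 + card V1 * alpha_k k V2 E2"
      using alpha_k_sum_le[OF fin, of k Ea Eb] A(4) B(4) by linarith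
  qed
qed

lemma mix_graphs:
  assumes G1: "simple_graph V1 E1" "V1 \<noteq> {}" "avg_degree V1 E1 \<le> D1"
    and G2: "simple_graph V2 E2" "V2 \<noteq> {}" "avg_degree V2 E2 \<le> D2"
  obtains V E where "simple_graph V E" "V \<noteq> {}" "avg_degree V E \<le> (D1 + D2) / 2"
    "real (alpha_k k V E) / real (card V) \<le>
       (real (alpha_k k V1 E1) / real (card V1) + real (alpha_k k V2 E2) / real (card V2)) / 2"
proof -
  define n1 where "n1 = real (card V1)"
  define n2 where "n2 = real (card V2)"
  define a1 where "a1 = real (alpha_k k V1 E1)"
  define a2 where "a2 = real (alpha_k k V2 E2)"
  define e1 where "e1 = real (card E1)"
  define e2 where "e2 = real (card E2)"
  have fin: "finite V1" "finite V2" using G1 G2 unfolding simple_graph_def by blast+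
  have pos: "n1 > 0" "n2 > 0" using G1 G2 fin unfolding n1_def n2_def by (auto simp: card_gt_0_iff)
  obtain V E where G: "simple_graph V E" and cV: "real (card V) = 2 * n1 * n2"
    and cE: "real (card E) = n2 * e1 + n1 * e2" and alpha: "real (alpha_k k V E) \<le> n2 * a1 + n1 * a2"
    using balanced_union[OF G1(1) G2(1), of k] unfolding n1_def n2_def e1_def e2_def a1_def a2_def
    by (metis (no_types, lifting) of_nat_add of_nat_le_iff of_nat_mult of_nat_numeral)
  have V_ne: "V \<noteq> {}" using cV pos by auto
  have fV: "finite V" using G unfolding simple_graph_def by blast
  have "2 * e1 \<le> D1 * n1" "2 * e2 \<le> D2 * n2"
    using G1 G2 fin avg_degree_le_iff unfolding n1_def n2_def e1_def e2_def by blast+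
  hence "n2 * (2 * e1) \<le> n2 * (D1 * n1)" "n1 * (2 * e2) \<le> n1 * (D2 * n2)"
    using pos by (simp_all add: mult_left_mono)
  hence "2 * (n2 * e1 + n1 * e2) \<le> (D1 + D2) / 2 * (2 * n1 * n2)"
    by (simp add: algebra_simps)
  hence avg: "avg_degree V E \<le> (D1 + D2) / 2"
    unfolding avg_degree_le_iff[OF fV V_ne] cV cE .
  have "real (alpha_k k V E) / real (card V) \<le> (n2 * a1 + n1 * a2) / (2 * n1 * n2)"
    using alpha pos cV by (simp add: divide_right_mono)
  also have "\<dots> = (a1 / n1 + a2 / n2) / 2" using pos by (simp add: field_simps)
  finally show ?thesis using that G V_ne avg unfolding a1_def a2_def n1_def n2_def by blast
qed

definition ratios :: "nat \<Rightarrow> nat \<Rightarrow> real set" where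
  "ratios k d = {real (alpha_k k V E) / real (card V) | V E.
                  simple_graph V E \<and> V \<noteq> {} \<and> avg_degree V E \<le> real d}"

lemma f_eq_Inf_ratios: "f k d = Inf (ratios k d)"
  unfolding f_def ratios_def by simp

lemma ratios_nonempty: "ratios k d \<noteq> {}"
proof -
  have "simple_graph {0} {}" unfolding simple_graph_def by simp
  moreover have "avg_degree {0} {} \<le> real d" unfolding avg_degree_def by simp
  ultimately show ?thesis unfolding ratios_def by blast
qed

lemma f_le_ratio:
  assumes "r \<in> ratios k d"
  shows "f k d \<le> r"
proof -
  have "bdd_below (ratios k d)" unfolding ratios_def by (rule bdd_belowI[of _ 0]) auto
  thus ?thesis unfolding f_eq_Inf_ratios using assms by (simp add: cInf_lower)
qed

lemma twice_f_le_ratio_sum: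
  assumes "t \<le> d" and "r1 \<in> ratios k (d - t)" and "r2 \<in> ratios k (d + t)"
  shows "2 * f k d \<le> r1 + r2"
proof -
  obtain V1 E1 where G1: "r1 = real (alpha_k k V1 E1) / real (card V1)" "simple_graph V1 E1"
    "V1 \<noteq> {}" "avg_degree V1 E1 \<le> real (d - t)" using assms(2) unfolding ratios_def by blast
  obtain V2 E2 where G2: "r2 = real (alpha_k k V2 E2) / real (card V2)" "simple_graph V2 E2"
    "V2 \<noteq> {}" "avg_degree V2 E2 \<le> real (d + t)" using assms(3) unfolding ratios_def by blast
  have "(real (d - t) + real (d + t)) / 2 = real d" using assms(1) by simp
  then obtain V E where "simple_graph V E" "V \<noteq> {}" "avg_degree V E \<le> real d"
    "real (alpha_k k V E) / real (card V) \<le> (r1 + r2) / 2"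
    using mix_graphs[OF G1(2-4) G2(2-4), of k] unfolding G1(1) G2(1) by metis
  hence "real (alpha_k k V E) / real (card V) \<in> ratios k d"
    and "real (alpha_k k V E) / real (card V) \<le> (r1 + r2) / 2"
    unfolding ratios_def by blast+
  hence "f k d \<le> (r1 + r2) / 2" using f_le_ratio order_trans by blast
  thus ?thesis by simp
qed

lemma le_Inf_add_Inf:
  fixes A B :: "'a::{conditionally_complete_linorder, ordered_ab_group_add} set"
  assumes "A \<noteq> {}" and "B \<noteq> {}" and "\<And>a b. a \<in> A \<Longrightarrow> b \<in> B \<Longrightarrow> c \<le> a + b"
  shows "c \<le> Inf A + Inf B"
proof -
  have "c - Inf B \<le> a" if "a \<in> A" for a
  proof -
    have "c - a \<le> Inf B"
    proof (rule cInf_greatest[OF assms(2)])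
      fix b assume "b \<in> B"
      thus "c - a \<le> b" using assms(3)[OF that \<open>b \<in> B\<close>] by (simp add: diff_le_eq add.commute)
    qed
    thus ?thesis by (simp add: algebra_simps)
  qed
  hence "c - Inf B \<le> Inf A" using assms(1) by (intro cInf_greatest)
  thus ?thesis by (simp add: algebra_simps)
qed

theorem mainTheorem3:
  fixes d k t :: nat
  assumes "t \<le> d"
  shows "2 * f k d \<le> f k (d - t) + f k (d + t)"
  unfolding f_eq_Inf_ratios[of k "d - t"] f_eq_Inf_ratios[of k "d + t"]
  using le_Inf_add_Inf[OF ratios_nonempty ratios_nonempty] twice_f_le_ratio_sum[OF assms]
  by blast

end
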